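(* Let $G$ be a graph with at least one isolated vertex such that $G\ne\widetilde G$, and let $T$ be a minimum twin cover of $G$. Then for every $t\ge1$, \[(t+1)|T|+t-1\le \det(\mu_t(G))\le \det(\widetilde G)+(t+1)|T|+t-1.\] Moreover, both bounds are sharp: each is attained (with equality) by some graph $G$ satisfying the hypotheses.
   Context: All graphs are finite and simple. For a graph $G$ with $V(G)=\{v_1,\dots,v_n\}$ and an integer $t\ge1$, the generalized Mycielskian $\mu_t(G)$ has vertex set $\{u_i^s: 1\le i\le n,\ 0\le s\le t\}\cup\{w\}$, where $u_i^0$ is identified with $v_i$. Its edges are: $u_i^0u_j^0$ for each edge $v_iv_j$ of $G$; $u_i^su_j^{s+1}$ and $u_j^su_i^{s+1}$ for each edge $v_iv_j$ of $G$ and each $0\le s<t$; and $u_i^tw$ for all $1\le i\le n$. A set $S\subseteq V(G)$ is a determining set for $G$ if the only automorphism of $G$ fixing every vertex of $S$ is the identity; $\det(G)$ is the minimum size of a determining set. Two vertices are twins if they have the same open neighborhood; being twins is an equivalence relation on $V(G)$, and the twin quotient $\widetilde G$ has the equivalence classes as vertices, with two classes adjacent iff some members are adjacent in $G$ ($G\ne\widetilde G$ means $G$ has a pair of distinct twins). A minimum twin cover is a minimum-size vertex subset containing at least one vertex from every pair of distinct twins. *)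

theory Defs
  imports Main
begin

definition sgraph :: "'a set \<Rightarrow> 'a set set \<Rightarrow> bool" where
  "sgraph V E \<longleftrightarrow> finite V \<and> (\<forall>e\<in>E. e \<subseteq> V \<and> card e = 2)"

definition nbhd :: "'a set \<Rightarrow> 'a set set \<Rightarrow> 'a \<Rightarrow> 'a set" where
  "nbhd V E v = {u\<in>V. {u, v} \<in> E}"

definition isolated :: "'a set \<Rightarrow> 'a set set \<Rightarrow> 'a \<Rightarrow> bool" where
  "isolated V E v \<longleftrightarrow> v \<in> V \<and> nbhd V E v = {}"

definition automorphism :: "'a set \<Rightarrow> 'a set set \<Rightarrow> ('a \<Rightarrow> 'a) \<Rightarrow> bool" where
  "automorphism V E f \<longleftrightarrow> bij_betw f V V \<and>
     (\<forall>x\<in>V. \<forall>y\<in>V. {x, y} \<in> E \<longleftrightarrow> {f x, f y} \<in> E)"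

definition determining_set :: "'a set \<Rightarrow> 'a set set \<Rightarrow> 'a set \<Rightarrow> bool" where
  "determining_set V E S \<longleftrightarrow> S \<subseteq> V \<and>
     (\<forall>f. automorphism V E f \<longrightarrow> (\<forall>x\<in>S. f x = x) \<longrightarrow> (\<forall>x\<in>V. f x = x))"

definition det_num :: "'a set \<Rightarrow> 'a set set \<Rightarrow> nat" where
  "det_num V E = Min (card ` {S. determining_set V E S})"

definition twins :: "'a set \<Rightarrow> 'a set set \<Rightarrow> 'a \<Rightarrow> 'a \<Rightarrow> bool" where
  "twins V E u v \<longleftrightarrow> u \<in> V \<and> v \<in> V \<and> nbhd V E u = nbhd V E v"

text \<open>G differs from its twin quotient: G has a pair of distinct twins.\<close>
definition has_distinct_twins :: "'a set \<Rightarrow> 'a set set \<Rightarrow> bool" where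
  "has_distinct_twins V E \<longleftrightarrow> (\<exists>u v. u \<noteq> v \<and> twins V E u v)"

definition twin_cover :: "'a set \<Rightarrow> 'a set set \<Rightarrow> 'a set \<Rightarrow> bool" where
  "twin_cover V E T \<longleftrightarrow> T \<subseteq> V \<and>
     (\<forall>u v. u \<noteq> v \<and> twins V E u v \<longrightarrow> u \<in> T \<or> v \<in> T)"

definition min_twin_cover :: "'a set \<Rightarrow> 'a set set \<Rightarrow> 'a set \<Rightarrow> bool" where
  "min_twin_cover V E T \<longleftrightarrow> twin_cover V E T \<and>
     (\<forall>T'. twin_cover V E T' \<longrightarrow> card T \<le> card T')"

definition twin_class :: "'a set \<Rightarrow> 'a set set \<Rightarrow> 'a \<Rightarrow> 'a set" where
  "twin_class V E v = {u\<in>V. twins V E u v}"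

definition quotV :: "'a set \<Rightarrow> 'a set set \<Rightarrow> 'a set set" where
  "quotV V E = twin_class V E ` V"

definition quotE :: "'a set \<Rightarrow> 'a set set \<Rightarrow> 'a set set set" where
  "quotE V E = {{A, B} | A B. A \<in> quotV V E \<and> B \<in> quotV V E \<and>
                   (\<exists>a\<in>A. \<exists>b\<in>B. {a, b} \<in> E)}"

text \<open>Generalized Mycielskian mu_t(G): vertex u_i^s is Some (v_i, s), the root w is None.\<close>
definition mycV :: "nat \<Rightarrow> 'a set \<Rightarrow> ('a \<times> nat) option set" where
  "mycV t V = {Some (v, s) | v s. v \<in> V \<and> s \<le> t} \<union> {None}"

definition mycE :: "nat \<Rightarrow> 'a set \<Rightarrow> 'a set set \<Rightarrow> ('a \<times> nat) option set set" where
  "mycE t V E =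
     {{Some (u, 0), Some (v, 0)} | u v. {u, v} \<in> E}
   \<union> {{Some (u, s), Some (v, Suc s)} | u v s. {u, v} \<in> E \<and> s < t}
   \<union> {{Some (v, t), None} | v. v \<in> V}"

end

theory Submission
  imports Defs "HOL-Combinatorics.Transposition"
begin

(* A determining set contains all but at most one vertex of every set of mutual twins. In mu_t(G)
   the copies u^s, v^s of twins u, v of G are twins, and all copies u^s with u isolated and s < t
   are mutual twins; counting the resulting sets of twins gives the lower bound.

   For the upper bound choose one representative in every twin class of G, an isolated one r0
   among them, and a minimum determining set D of the twin quotient. Fix every copy of a
   non-representative, the copies r0^s with 0 < s < t, and the r^0 whose class lies in D. An
   automorphism fixing these fixes the root w, the only neighbour of a vertex of degree one, and
   hence every layer of copies of non-isolated vertices, which are peeled off from w one after the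
   other. On layer 0 it induces an automorphism of G whose action on the twin quotient fixes D and
   so every class; inductively, on every layer it moves a vertex at most to a twin, and such a
   vertex is fixed since either one of the two is a fixed non-representative or both are
   representatives. Two isolated vertices attain both bounds. *)

section \<open>Automorphisms and determining sets\<close>

lemma sgraph_finite: "sgraph V E \<Longrightarrow> finite V"
  unfolding sgraph_def by blast

lemma sgraph_edgeD: "sgraph V E \<Longrightarrow> {x, y} \<in> E \<Longrightarrow> x \<in> V"
  unfolding sgraph_def by blast

lemma mem_nbhd_iff: "x \<in> nbhd V E y \<longleftrightarrow> x \<in> V \<and> {x, y} \<in> E"
  unfolding nbhd_def by simp

lemma automorphism_bij: "automorphism V E f \<Longrightarrow> bij_betw f V V"
  unfolding automorphism_def by blast

lemma automorphism_edge_iff: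
  "automorphism V E f \<Longrightarrow> x \<in> V \<Longrightarrow> y \<in> V \<Longrightarrow> {f x, f y} \<in> E \<longleftrightarrow> {x, y} \<in> E"
  unfolding automorphism_def by blast

lemma automorphism_nbhd:
  assumes f: "automorphism V E f" and x: "x \<in> V"
  shows "nbhd V E (f x) = f ` nbhd V E x"
proof -
  have bij: "bij_betw f V V" using automorphism_bij[OF f] .
  have "y \<in> nbhd V E (f x) \<longleftrightarrow> y \<in> f ` nbhd V E x" if y: "y \<in> V" for y
  proof -
    obtain z where z: "z \<in> V" "y = f z" using bij y by (metis bij_betw_imp_surj_on imageE)
    have "f z \<in> f ` nbhd V E x \<longleftrightarrow> z \<in> nbhd V E x"
      using bij z(1) by (auto simp: bij_betw_def inj_on_def nbhd_def)
    then show ?thesis using automorphism_edge_iff[OF f z(1) x] z y by (simp add: mem_nbhd_iff)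
  qed
  moreover have "f ` nbhd V E x \<subseteq> V" using bij by (auto simp: nbhd_def bij_betw_def)
  ultimately show ?thesis by (auto simp: nbhd_def)
qed

lemma automorphism_UN_nbhd:
  assumes "automorphism V E f" "X \<subseteq> V"
  shows "f ` (\<Union>x\<in>X. nbhd V E x) = (\<Union>x\<in>f ` X. nbhd V E x)"
  using automorphism_nbhd[OF assms(1)] assms(2) by (auto simp: image_UN)

lemma automorphism_fixed_preimage:
  assumes "automorphism V E f" "\<forall>y\<in>S. f y = y" "x \<in> V" "f x \<in> S"
  shows "f x = x"
proof -
  have "f (f x) = f x" using assms(2,4) by blast
  moreover have "f x \<in> V" using bij_betwE[OF automorphism_bij[OF assms(1)]] assms(3) by blast
  ultimately show ?thesis
    using bij_betw_imp_inj_on[OF automorphism_bij[OF assms(1)]] assms(3) unfolding inj_on_def by blast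
qed

lemma determining_set_finite: "finite V \<Longrightarrow> finite {S. determining_set V E S}"
  unfolding determining_set_def by (rule finite_subset[of _ "Pow V"]) auto

lemma determining_set_carrier: "determining_set V E V"
  unfolding determining_set_def by auto

lemma det_num_greatest:
  assumes "finite V" "\<And>S. determining_set V E S \<Longrightarrow> n \<le> card S"
  shows "n \<le> det_num V E"
  unfolding det_num_def using assms determining_set_finite[OF assms(1)] determining_set_carrier[of V E]
  by (subst Min_ge_iff) auto

lemma det_num_le_card:
  assumes "finite V" "determining_set V E S"
  shows "det_num V E \<le> card S"
  unfolding det_num_def using assms determining_set_finite[OF assms(1)] by (intro Min_le) auto

lemma det_num_attained:
  assumes "finite V"
  obtains D where "determining_set V E D" "card D = det_num V E"
proof -
  have "det_num V E \<in> card ` {S. determining_set V E S}"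
    unfolding det_num_def using determining_set_finite[OF assms] determining_set_carrier[of V E]
    by (intro Min_in) auto
  then show ?thesis using that by force
qed

lemma card_le_add_card_image:
  assumes "finite A" "S \<subseteq> A" "inj_on \<phi> (A - S)"
  shows "card A \<le> card S + card (\<phi> ` A)"
proof -
  have "card (A - S) \<le> card (\<phi> ` A)"
    using card_inj_on_le[OF assms(3)] assms(1) by auto
  moreover have "card A = card S + card (A - S)"
    using card_Diff_subset[OF finite_subset[OF assms(2,1)] assms(2)] card_mono[OF assms(1,2)] by simp
  ultimately show ?thesis by simp
qed

lemma twins_swap_automorphism:
  assumes "twins V E u v"
  shows "automorphism V E (transpose u v)"
proof -
  let ?\<tau> = "transpose u v"
  have uv: "u \<in> V" "v \<in> V" and N: "nbhd V E u = nbhd V E v"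
    using assms unfolding twins_def by auto
  have \<tau>V: "?\<tau> x \<in> V \<longleftrightarrow> x \<in> V" for x
    using uv by (auto simp: transpose_def)
  have \<tau>_nbhd: "nbhd V E (?\<tau> y) = nbhd V E y" for y
    using N by (auto simp: transpose_def)
  have \<tau>_mem: "?\<tau> x \<in> nbhd V E y \<longleftrightarrow> x \<in> nbhd V E y" if "y \<in> V" for x y
  proof -
    have "u \<in> nbhd V E y \<longleftrightarrow> v \<in> nbhd V E y"
      using N that uv by (auto simp: mem_nbhd_iff insert_commute)
    then show ?thesis by (auto simp: transpose_def)
  qed
  have "{?\<tau> x, ?\<tau> y} \<in> E \<longleftrightarrow> {x, y} \<in> E" if "x \<in> V" "y \<in> V" for x y
  proof -
    have "{?\<tau> x, ?\<tau> y} \<in> E \<longleftrightarrow> ?\<tau> x \<in> nbhd V E (?\<tau> y)"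
      using that \<tau>V by (simp add: mem_nbhd_iff)
    also have "\<dots> \<longleftrightarrow> x \<in> nbhd V E y" using \<tau>_nbhd \<tau>_mem[OF that(2)] by simp
    finally show ?thesis using that by (simp add: mem_nbhd_iff)
  qed
  then show ?thesis unfolding automorphism_def using uv by auto
qed

text \<open>Swapping two twins outside S is an automorphism fixing S pointwise.\<close>
lemma determining_set_card_ge:
  assumes "finite V" "determining_set V E S"
    and twins: "\<And>x y. x \<in> V \<Longrightarrow> y \<in> V \<Longrightarrow> \<phi> x = \<phi> y \<Longrightarrow> twins V E x y"
  shows "card V \<le> card S + card (\<phi> ` V)"
proof (rule card_le_add_card_image)
  show "finite V" "S \<subseteq> V" using assms(1,2) unfolding determining_set_def by auto
  show "inj_on \<phi> (V - S)"
  proof (rule inj_onI, rule ccontr)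
    fix x y assume x: "x \<in> V - S" and y: "y \<in> V - S" and "\<phi> x = \<phi> y" "x \<noteq> y"
    then have "automorphism V E (transpose x y)" using twins_swap_automorphism[OF twins] by auto
    moreover have "\<forall>z\<in>S. transpose x y z = z" using x y by (auto simp: transpose_def)
    ultimately have "transpose x y x = x" using assms(2) x unfolding determining_set_def by blast
    with \<open>x \<noteq> y\<close> show False by simp
  qed
qed

section \<open>Twin classes\<close>

lemma twins_sym: "twins V E u v \<Longrightarrow> twins V E v u"
  and twins_trans: "twins V E u v \<Longrightarrow> twins V E v w \<Longrightarrow> twins V E u w"
  unfolding twins_def by auto

lemma twins_refl: "v \<in> V \<Longrightarrow> twins V E v v"
  unfolding twins_def by simp

lemma twin_class_eq_iff:
  "v \<in> V \<Longrightarrow> w \<in> V \<Longrightarrow> twin_class V E v = twin_class V E w \<longleftrightarrow> twins V E v w"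
  unfolding twin_class_def twins_def by (auto simp: set_eq_iff)

lemma quotV_finite: "finite V \<Longrightarrow> finite (quotV V E)"
  unfolding quotV_def by simp

definition twin_transversal :: "'a set \<Rightarrow> 'a set set \<Rightarrow> 'a set \<Rightarrow> bool" where
  "twin_transversal V E R \<longleftrightarrow> R \<subseteq> V \<and> (\<forall>v\<in>V. \<exists>r\<in>R. twins V E v r) \<and>
     (\<forall>r\<in>R. \<forall>r'\<in>R. twins V E r r' \<longrightarrow> r = r')"

lemma twin_transversal_exists: obtains R where "twin_transversal V E R"
proof
  define rep where "rep v = (SOME r. twins V E v r)" for v
  have rep: "twins V E v (rep v)" if "v \<in> V" for v
    unfolding rep_def using twins_refl[OF that] by (rule someI)
  have rep_eq: "rep v = rep w" if "twins V E v w" for v w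
  proof -
    have "twins V E v = twins V E w" using that by (intro ext) (meson twins_sym twins_trans)
    then show ?thesis unfolding rep_def by simp
  qed
  show "twin_transversal V E (rep ` V)"
    unfolding twin_transversal_def
  proof (intro conjI ballI impI)
    show "rep ` V \<subseteq> V" using rep unfolding twins_def by blast
    show "\<exists>r\<in>rep ` V. twins V E v r" if "v \<in> V" for v using rep[OF that] that by blast
    fix r r' assume "r \<in> rep ` V" "r' \<in> rep ` V" and rr': "twins V E r r'"
    then obtain v w where v: "v \<in> V" "r = rep v" and w: "w \<in> V" "r' = rep w" by blast
    have "twins V E v w"
      using rep[OF v(1)] rr' rep[OF w(1)] unfolding v(2) w(2) by (meson twins_sym twins_trans)
    then show "r = r'" using rep_eq v w by simp
  qed
qed

lemma twin_transversal_twin_class_bij: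
  assumes "twin_transversal V E R"
  shows "bij_betw (twin_class V E) R (quotV V E)"
proof -
  have R: "R \<subseteq> V" "\<And>v. v \<in> V \<Longrightarrow> \<exists>r\<in>R. twins V E v r"
    "\<And>r r'. r \<in> R \<Longrightarrow> r' \<in> R \<Longrightarrow> twins V E r r' \<Longrightarrow> r = r'"
    using assms unfolding twin_transversal_def by auto
  have "inj_on (twin_class V E) R"
  proof (rule inj_onI)
    fix x y assume "x \<in> R" "y \<in> R" "twin_class V E x = twin_class V E y"
    then show "x = y" using R(1,3) twin_class_eq_iff[of x V y E] by blast
  qed
  moreover have "twin_class V E ` R = quotV V E"
  proof
    show "twin_class V E ` R \<subseteq> quotV V E" unfolding quotV_def using R(1) by blast
    show "quotV V E \<subseteq> twin_class V E ` R"
    proof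
      fix C assume "C \<in> quotV V E"
      then obtain v where v: "v \<in> V" "C = twin_class V E v" unfolding quotV_def by blast
      then obtain r where r: "r \<in> R" "twins V E v r" using R(2) by blast
      then show "C \<in> twin_class V E ` R" using v R(1) twin_class_eq_iff[of v V r E] by blast
    qed
  qed
  ultimately show ?thesis unfolding bij_betw_def by blast
qed

lemma twin_transversal_twin_cover: "twin_transversal V E R \<Longrightarrow> twin_cover V E (V - R)"
  unfolding twin_transversal_def twin_cover_def twins_def by blast

lemma twin_cover_card_ge:
  assumes "finite V" "twin_cover V E T"
  shows "card V \<le> card T + card (quotV V E)"
  unfolding quotV_def
proof (rule card_le_add_card_image)
  show "finite V" "T \<subseteq> V" using assms unfolding twin_cover_def by auto
  show "inj_on (twin_class V E) (V - T)"
  proof (rule inj_onI)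
    fix x y assume "x \<in> V - T" "y \<in> V - T" "twin_class V E x = twin_class V E y"
    then show "x = y" using assms(2) twin_class_eq_iff[of x V y E] unfolding twin_cover_def by blast
  qed
qed

lemma min_twin_cover_card:
  assumes "finite V" "min_twin_cover V E T"
  shows "card T + card (quotV V E) = card V"
proof -
  obtain R where R: "twin_transversal V E R" using twin_transversal_exists .
  have RV: "R \<subseteq> V" using R unfolding twin_transversal_def by blast
  have "card T \<le> card (V - R)"
    using assms(2) twin_transversal_twin_cover[OF R] unfolding min_twin_cover_def by blast
  also have "\<dots> = card V - card (quotV V E)"
    using card_Diff_subset[OF finite_subset[OF RV assms(1)] RV]
      bij_betw_same_card[OF twin_transversal_twin_class_bij[OF R]] by simp
  finally show ?thesis
    using twin_cover_card_ge[OF assms(1)] assms(2) card_mono[OF assms(1) RV]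
      bij_betw_same_card[OF twin_transversal_twin_class_bij[OF R]]
    unfolding min_twin_cover_def by fastforce
qed

lemma quotE_iff:
  "{A, B} \<in> quotE V E \<longleftrightarrow> A \<in> quotV V E \<and> B \<in> quotV V E \<and> (\<exists>a\<in>A. \<exists>b\<in>B. {a, b} \<in> E)"
proof
  assume "{A, B} \<in> quotE V E"
  then obtain A' B' where AB: "{A, B} = {A', B'}" "A' \<in> quotV V E" "B' \<in> quotV V E"
    "\<exists>a\<in>A'. \<exists>b\<in>B'. {a, b} \<in> E"
    unfolding quotE_def mem_Collect_eq by (elim exE conjE) (simp only:)
  have "(A = A' \<and> B = B') \<or> (A = B' \<and> B = A')" using AB(1) by (simp add: doubleton_eq_iff)
  then show "A \<in> quotV V E \<and> B \<in> quotV V E \<and> (\<exists>a\<in>A. \<exists>b\<in>B. {a, b} \<in> E)"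
    using AB(2-4) by (metis insert_commute)
next
  assume "A \<in> quotV V E \<and> B \<in> quotV V E \<and> (\<exists>a\<in>A. \<exists>b\<in>B. {a, b} \<in> E)"
  then show "{A, B} \<in> quotE V E" unfolding quotE_def by blast
qed

lemma automorphism_twins_iff:
  assumes "automorphism V E g" "u \<in> V" "v \<in> V"
  shows "twins V E (g u) (g v) \<longleftrightarrow> twins V E u v"
proof -
  have bij: "bij_betw g V V" using automorphism_bij[OF assms(1)] .
  have "nbhd V E u \<subseteq> V" "nbhd V E v \<subseteq> V" unfolding nbhd_def by auto
  then have "g ` nbhd V E u = g ` nbhd V E v \<longleftrightarrow> nbhd V E u = nbhd V E v"
    by (rule inj_on_image_eq_iff[OF bij_betw_imp_inj_on[OF bij]])
  then show ?thesis
    using assms bij_betwE[OF bij] automorphism_nbhd[OF assms(1)] unfolding twins_def by simp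
qed

lemma automorphism_twin_class:
  assumes "automorphism V E g" "v \<in> V"
  shows "g ` twin_class V E v = twin_class V E (g v)"
proof -
  have bij: "bij_betw g V V" using automorphism_bij[OF assms(1)] .
  have "twin_class V E (g v) = g ` {u \<in> V. twins V E (g u) (g v)}"
    unfolding twin_class_def using bij by (auto simp: bij_betw_def)
  then show ?thesis
    unfolding twin_class_def using automorphism_twins_iff[OF assms(1) _ assms(2)] by auto
qed

lemma automorphism_quot:
  assumes g: "automorphism V E g" and fin: "finite V"
  shows "automorphism (quotV V E) (quotE V E) ((`) g)"
proof -
  have bij: "bij_betw g V V" using automorphism_bij[OF g] .
  have sub: "C \<subseteq> V" if "C \<in> quotV V E" for C
    using that unfolding quotV_def twin_class_def by auto
  have into: "(`) g ` quotV V E \<subseteq> quotV V E"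
  proof
    fix C assume "C \<in> (`) g ` quotV V E"
    then obtain v where v: "v \<in> V" "C = g ` twin_class V E v" unfolding quotV_def by blast
    then show "C \<in> quotV V E"
      unfolding quotV_def using automorphism_twin_class[OF g v(1)] bij_betwE[OF bij] by blast
  qed
  have inj: "inj_on ((`) g) (quotV V E)"
    by (rule inj_onI) (use inj_on_image_eq_iff[OF bij_betw_imp_inj_on[OF bij] sub sub] in blast)
  have "bij_betw ((`) g) (quotV V E) (quotV V E)"
    unfolding bij_betw_def using inj endo_inj_surj[OF quotV_finite[OF fin] into inj] by blast
  moreover have "{A, B} \<in> quotE V E \<longleftrightarrow> {g ` A, g ` B} \<in> quotE V E"
    if "A \<in> quotV V E" "B \<in> quotV V E" for A B
  proof -
    have "{g a, g b} \<in> E \<longleftrightarrow> {a, b} \<in> E" if "a \<in> A" "b \<in> B" for a b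
      using automorphism_edge_iff[OF g] sub[OF \<open>A \<in> quotV V E\<close>] sub[OF \<open>B \<in> quotV V E\<close>] that
      by blast
    then have "(\<exists>a\<in>g ` A. \<exists>b\<in>g ` B. {a, b} \<in> E) \<longleftrightarrow> (\<exists>a\<in>A. \<exists>b\<in>B. {a, b} \<in> E)"
      by blast
    moreover have "g ` A \<in> quotV V E" "g ` B \<in> quotV V E" using into that by auto
    ultimately show ?thesis using that by (simp add: quotE_iff)
  qed
  ultimately show ?thesis unfolding automorphism_def by blast
qed

section \<open>The generalized Mycielskian\<close>

fun myc_adj :: "nat \<Rightarrow> 'a set \<Rightarrow> 'a set set \<Rightarrow> ('a \<times> nat) option \<Rightarrow> ('a \<times> nat) option \<Rightarrow> bool" where
  "myc_adj t V E None None = False"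
| "myc_adj t V E None (Some (v, r)) = (r = t \<and> v \<in> V)"
| "myc_adj t V E (Some (u, s)) None = (s = t \<and> u \<in> V)"
| "myc_adj t V E (Some (u, s)) (Some (v, r)) =
     ({u, v} \<in> E \<and> (s = 0 \<and> r = 0 \<or> r = Suc s \<and> s < t \<or> s = Suc r \<and> r < t))"

lemma mycE_iff: "{x, y} \<in> mycE t V E \<longleftrightarrow> myc_adj t V E x y"
proof
  assume "{x, y} \<in> mycE t V E"
  then show "myc_adj t V E x y"
    unfolding mycE_def by (elim UnE CollectE exE conjE) (auto simp: doubleton_eq_iff insert_commute)
next
  assume adj: "myc_adj t V E x y"
  show "{x, y} \<in> mycE t V E"
  proof (cases x)
    case None
    then obtain v r where "y = Some (v, r)" using adj by (cases y) auto
    then show ?thesis using adj None unfolding mycE_def by (auto simp: insert_commute)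
  next
    case (Some p)
    then obtain u s where x: "x = Some (u, s)" by (cases p) auto
    show ?thesis
    proof (cases y)
      case None
      then show ?thesis using adj x unfolding mycE_def by auto
    next
      case (Some q)
      then obtain v r where y: "y = Some (v, r)" by (cases q) auto
      have e: "{u, v} \<in> E" "{v, u} \<in> E" using adj x y by (auto simp: insert_commute)
      have "s = 0 \<and> r = 0 \<or> r = Suc s \<and> s < t \<or> s = Suc r \<and> r < t" using adj x y by simp
      then show ?thesis
      proof (elim disjE conjE)
        assume "s = Suc r" "r < t"
        then have "{Some (v, r), Some (u, s)} \<in> mycE t V E" using e unfolding mycE_def by blast
        then show ?thesis using x y by (simp add: insert_commute)
      qed (use e x y in \<open>auto simp: mycE_def\<close>)
    qed
  qed
qed

lemma Some_in_mycV [simp]: "Some (v, s) \<in> mycV t V \<longleftrightarrow> v \<in> V \<and> s \<le> t"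
  and None_in_mycV [simp]: "None \<in> mycV t V"
  unfolding mycV_def by auto

lemma mycV_eq: "mycV t V = insert None (Some ` (V \<times> {..t}))"
  unfolding mycV_def by auto

lemma mycV_finite: "finite V \<Longrightarrow> finite (mycV t V)"
  unfolding mycV_eq by simp

lemma card_mycV: "finite V \<Longrightarrow> card (mycV t V) = card V * (t + 1) + 1"
  unfolding mycV_eq by (simp add: card_image card_cartesian_product)

lemma nbhd_myc: "nbhd (mycV t V) (mycE t V E) x = {y \<in> mycV t V. myc_adj t V E y x}"
  unfolding nbhd_def by (simp add: mycE_iff)

lemma myc_automorphism_adj:
  assumes "automorphism (mycV t V) (mycE t V E) f" "x \<in> mycV t V" "y \<in> mycV t V"
  shows "myc_adj t V E (f x) (f y) \<longleftrightarrow> myc_adj t V E x y"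
  using automorphism_edge_iff[OF assms] by (simp add: mycE_iff)

lemma myc_nbhd_root: "nbhd (mycV t V) (mycE t V E) None = Some ` (V \<times> {t})"
proof -
  have "myc_adj t V E y None \<longleftrightarrow> y \<in> Some ` (V \<times> {t})" for y
    by (cases y) auto
  then show ?thesis unfolding nbhd_myc by auto
qed

lemma myc_nbhd_isolated:
  assumes "sgraph V E" "u \<in> V" "nbhd V E u = {}"
  shows "nbhd (mycV t V) (mycE t V E) (Some (u, s)) = (if s = t then {None} else {})"
proof -
  have no_edge: "{a, u} \<notin> E" for a
  proof
    assume au: "{a, u} \<in> E"
    then have "a \<in> nbhd V E u" using sgraph_edgeD[OF assms(1) au] by (simp add: mem_nbhd_iff)
    with assms(3) show False by simp
  qed
  have "myc_adj t V E y (Some (u, s)) \<longleftrightarrow> y = None \<and> s = t" for y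
  proof (cases y)
    case (Some p)
    moreover obtain a r where "p = (a, r)" by fastforce
    ultimately show ?thesis using no_edge[of a] by simp
  qed (simp add: assms(2))
  then have "nbhd (mycV t V) (mycE t V E) (Some (u, s)) = {y \<in> mycV t V. y = None \<and> s = t}"
    unfolding nbhd_myc by simp
  then show ?thesis by (auto simp: mycV_def)
qed

lemma myc_nbhd_twins:
  assumes "sgraph V E" "twins V E u v"
  shows "nbhd (mycV t V) (mycE t V E) (Some (u, s)) = nbhd (mycV t V) (mycE t V E) (Some (v, s))"
proof -
  have uv: "u \<in> V" "v \<in> V" and N: "nbhd V E u = nbhd V E v" using assms(2) unfolding twins_def by auto
  have edge: "{a, u} \<in> E \<longleftrightarrow> {a, v} \<in> E" for a
  proof (cases "a \<in> V")
    case True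
    then show ?thesis by (metis N mem_nbhd_iff)
  next
    case False
    then show ?thesis using sgraph_edgeD[OF assms(1), of a] by blast
  qed
  have "myc_adj t V E y (Some (u, s)) \<longleftrightarrow> myc_adj t V E y (Some (v, s))" for y
  proof (cases y)
    case (Some p)
    moreover obtain a r where "p = (a, r)" by fastforce
    ultimately show ?thesis using edge[of a] by simp
  qed (simp add: uv)
  then show ?thesis unfolding nbhd_myc by auto
qed

lemma myc_nbhd_nonisolated:
  assumes "u \<in> V" "nbhd V E u \<noteq> {}" "s \<le> t" "1 \<le> t"
  obtains y y' where "y \<noteq> y'" "y \<in> nbhd (mycV t V) (mycE t V E) (Some (u, s))"
    "y' \<in> nbhd (mycV t V) (mycE t V E) (Some (u, s))"
proof -
  obtain a where a: "a \<in> V" "{a, u} \<in> E" using assms(2) unfolding nbhd_def by auto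
  consider "s = t" | "s = 0" "s < t" | r where "s = Suc r" "s < t"
    using assms(3) not0_implies_Suc by fastforce
  then show ?thesis
  proof cases
    case 1
    show ?thesis
      by (rule that[of "Some (a, t - 1)" None]) (use a assms 1 in \<open>simp_all add: nbhd_myc\<close>)
  next
    case 2
    show ?thesis
      by (rule that[of "Some (a, 0)" "Some (a, 1)"]) (use a 2 in \<open>simp_all add: nbhd_myc\<close>)
  next
    case 3
    show ?thesis
      by (rule that[of "Some (a, r)" "Some (a, Suc s)"]) (use a 3 in \<open>simp_all add: nbhd_myc\<close>)
  qed
qed

lemma myc_nbhd_subset_singleton:
  assumes "sgraph V E" "1 \<le> t" "a \<in> V" "b \<in> V" "a \<noteq> b"
    and x: "x \<in> mycV t V" and N: "nbhd (mycV t V) (mycE t V E) x \<subseteq> {y}"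
  obtains u s where "x = Some (u, s)" "u \<in> V" "nbhd V E u = {}" "s \<le> t"
proof (cases x)
  case None
  then have "Some (a, t) \<in> nbhd (mycV t V) (mycE t V E) x" "Some (b, t) \<in> nbhd (mycV t V) (mycE t V E) x"
    using assms(3,4) by (simp_all add: myc_nbhd_root)
  then have "Some (a, t) = Some (b, t)" using N by blast
  with assms(5) show ?thesis by simp
next
  case (Some p)
  then obtain u s where us: "x = Some (u, s)" by (cases p) auto
  then have u: "u \<in> V" "s \<le> t" using x by auto
  have "nbhd V E u = {}"
  proof (rule ccontr)
    assume "nbhd V E u \<noteq> {}"
    then obtain y1 y2 where "y1 \<noteq> y2" "y1 \<in> nbhd (mycV t V) (mycE t V E) x"
      "y2 \<in> nbhd (mycV t V) (mycE t V E) x"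
      using myc_nbhd_nonisolated[OF u(1) _ u(2) assms(2)] unfolding us by metis
    with N show False by blast
  qed
  with us u that show ?thesis by blast
qed

section \<open>The lower bound\<close>

lemma myc_twins_same_layer:
  assumes "sgraph V E" "twins V E u v" "s \<le> t"
  shows "twins (mycV t V) (mycE t V E) (Some (u, s)) (Some (v, s))"
  using assms myc_nbhd_twins[OF assms(1,2)] unfolding twins_def by simp

lemma myc_twins_isolated:
  assumes "sgraph V E" "u \<in> V" "v \<in> V" "nbhd V E u = {}" "nbhd V E v = {}" "s < t" "r < t"
  shows "twins (mycV t V) (mycE t V E) (Some (u, s)) (Some (v, r))"
  using assms myc_nbhd_isolated[OF assms(1)] unfolding twins_def by simp

definition myc_label :: "nat \<Rightarrow> 'a set \<Rightarrow> 'a set set \<Rightarrow> ('a \<times> nat) option \<Rightarrow> ('a set \<times> nat) option" where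
  "myc_label t V E x = map_option (\<lambda>(v, s). (twin_class V E v, if nbhd V E v = {} \<and> s < t then 0 else s)) x"

lemma myc_label_twins:
  assumes sg: "sgraph V E" and t: "1 \<le> t" and xy: "x \<in> mycV t V" "y \<in> mycV t V"
    and eq: "myc_label t V E x = myc_label t V E y"
  shows "twins (mycV t V) (mycE t V E) x y"
proof (cases x)
  case None
  then show ?thesis using eq xy by (cases y) (simp_all add: myc_label_def twins_def)
next
  case (Some p)
  then obtain u s where x: "x = Some (u, s)" by (cases p) auto
  then obtain v r where y: "y = Some (v, r)" using eq by (cases y) (auto simp: myc_label_def)
  have uv: "u \<in> V" "v \<in> V" "s \<le> t" "r \<le> t" using xy x y by auto
  have cl: "twin_class V E u = twin_class V E v"
    and layer: "(if nbhd V E u = {} \<and> s < t then 0 else s) = (if nbhd V E v = {} \<and> r < t then 0 else r)"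
    using eq unfolding x y myc_label_def by simp_all
  have tw: "twins V E u v" using cl twin_class_eq_iff[OF uv(1,2)] by simp
  then have N: "nbhd V E u = nbhd V E v" unfolding twins_def by simp
  show ?thesis
  proof (cases "nbhd V E u = {} \<and> s < t \<and> r < t")
    case True
    then show ?thesis unfolding x y using myc_twins_isolated[OF sg uv(1,2)] N by simp
  next
    case False
    with layer N t have "s = r" by (cases "nbhd V E v = {}") (auto split: if_splits)
    then show ?thesis unfolding x y using myc_twins_same_layer[OF sg tw uv(3)] by simp
  qed
qed

lemma myc_label_image:
  assumes "isolated V E v0"
  shows "myc_label t V E ` mycV t V
    \<subseteq> insert None (Some ` (quotV V E \<times> {..t} - {twin_class V E v0} \<times> {1..<t}))"
proof
  fix z assume "z \<in> myc_label t V E ` mycV t V"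
  then obtain x where x: "x \<in> mycV t V" "z = myc_label t V E x" by blast
  show "z \<in> insert None (Some ` (quotV V E \<times> {..t} - {twin_class V E v0} \<times> {1..<t}))"
  proof (cases x)
    case (Some p)
    then obtain v s where vs: "x = Some (v, s)" by (cases p) auto
    then have v: "v \<in> V" "s \<le> t" using x by auto
    have "twin_class V E v = twin_class V E v0 \<longleftrightarrow> nbhd V E v = {}"
      using assms twin_class_eq_iff[OF v(1), of v0 E] v(1) unfolding isolated_def twins_def by auto
    then show ?thesis using x v unfolding vs myc_label_def quotV_def by auto
  qed (simp add: x myc_label_def)
qed

lemma card_myc_label_image:
  assumes "finite V" "isolated V E v0" "1 \<le> t"
  shows "card (myc_label t V E ` mycV t V) + (t - 1) \<le> card (quotV V E) * (t + 1) + 1"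
proof -
  let ?Q = "quotV V E" and ?I = "{twin_class V E v0} \<times> {1..<t}"
  have I: "?I \<subseteq> ?Q \<times> {..t}" using assms(2) unfolding isolated_def quotV_def by auto
  have fin: "finite (?Q \<times> {..t})" using quotV_finite[OF assms(1)] by simp
  have "card (myc_label t V E ` mycV t V) \<le> card (insert None (Some ` (?Q \<times> {..t} - ?I)))"
    using myc_label_image[OF assms(2)] fin by (intro card_mono) auto
  also have "\<dots> \<le> card (?Q \<times> {..t} - ?I) + 1"
    using fin by (simp add: card_insert_if card_image)
  also have "card (?Q \<times> {..t} - ?I) = card ?Q * (t + 1) - (t - 1)"
    using card_Diff_subset[OF finite_subset[OF I fin] I] by (simp add: card_cartesian_product)
  finally show ?thesis using card_mono[OF fin I] by (simp add: card_cartesian_product)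
qed

lemma myc_det_num_lower_bound:
  assumes sg: "sgraph V E" and t: "1 \<le> t" and iso: "isolated V E v0" and T: "min_twin_cover V E T"
  shows "(t + 1) * card T + t - 1 \<le> det_num (mycV t V) (mycE t V E)"
proof (rule det_num_greatest)
  have fin: "finite V" using sgraph_finite[OF sg] .
  show "finite (mycV t V)" using mycV_finite[OF fin] .
  fix S assume S: "determining_set (mycV t V) (mycE t V E) S"
  have "card V * (t + 1) + 1 \<le> card S + card (myc_label t V E ` mycV t V)"
    using determining_set_card_ge[OF mycV_finite[OF fin] S myc_label_twins[OF sg t]]
    by (simp add: card_mycV[OF fin])
  moreover have "card V = card T + card (quotV V E)" using min_twin_cover_card[OF fin T] by simp
  ultimately show "(t + 1) * card T + t - 1 \<le> card S"
    using card_myc_label_image[OF fin iso t] by (simp add: algebra_simps)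
qed

section \<open>Automorphisms of the generalized Mycielskian\<close>

text \<open>The root is the only vertex adjacent to a vertex of degree one.\<close>
lemma myc_automorphism_fixes_root:
  assumes sg: "sgraph V E" and t: "1 \<le> t" and iso: "isolated V E v0"
    and ab: "a \<in> V" "b \<in> V" "a \<noteq> b"
    and f: "automorphism (mycV t V) (mycE t V E) f"
  shows "f None = None"
proof -
  let ?N = "nbhd (mycV t V) (mycE t V E)"
  have v0: "v0 \<in> V" "nbhd V E v0 = {}" using iso unfolding isolated_def by auto
  have x0: "Some (v0, t) \<in> mycV t V" using v0 by simp
  have "?N (f (Some (v0, t))) = {f None}"
    using automorphism_nbhd[OF f x0] myc_nbhd_isolated[OF sg v0] by simp
  moreover have "f (Some (v0, t)) \<in> mycV t V" using bij_betwE[OF automorphism_bij[OF f]] x0 by blast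
  ultimately obtain u s where "f (Some (v0, t)) = Some (u, s)" "u \<in> V" "nbhd V E u = {}"
    using myc_nbhd_subset_singleton[OF sg t ab] by (metis order_refl)
  then have "?N (f (Some (v0, t))) \<subseteq> {None}" using myc_nbhd_isolated[OF sg] by simp
  with \<open>?N (f (Some (v0, t))) = {f None}\<close> show ?thesis by simp
qed

definition myc_layer :: "nat \<Rightarrow> 'a set \<Rightarrow> 'a set set \<Rightarrow> nat \<Rightarrow> ('a \<times> nat) option set" where
  "myc_layer t V E s = {Some (u, s) | u. u \<in> V \<and> nbhd V E u \<noteq> {} \<and> s \<le> t}"

lemma myc_layer_subset: "myc_layer t V E s \<subseteq> mycV t V"
  unfolding myc_layer_def by auto

lemma myc_layer_top:
  assumes "sgraph V E" "1 \<le> t"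
  shows "myc_layer t V E t = {x \<in> nbhd (mycV t V) (mycE t V E) None.
                                  nbhd (mycV t V) (mycE t V E) x \<noteq> {None}}"
proof (rule set_eqI)
  fix x
  let ?N = "nbhd (mycV t V) (mycE t V E)"
  have top: "?N (Some (u, t)) \<noteq> {None} \<longleftrightarrow> nbhd V E u \<noteq> {}" if u: "u \<in> V" for u
  proof
    assume "nbhd V E u \<noteq> {}"
    then obtain y y' where "y \<noteq> y'" "y \<in> ?N (Some (u, t))" "y' \<in> ?N (Some (u, t))"
      using myc_nbhd_nonisolated[OF u _ order_refl assms(2)] by metis
    then show "?N (Some (u, t)) \<noteq> {None}" by (metis singletonD)
  next
    assume "?N (Some (u, t)) \<noteq> {None}"
    then show "nbhd V E u \<noteq> {}" using myc_nbhd_isolated[OF assms(1) u, where s=t and t=t] by auto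
  qed
  show "x \<in> myc_layer t V E t \<longleftrightarrow> x \<in> {x \<in> ?N None. ?N x \<noteq> {None}}"
  proof (cases "x \<in> ?N None")
    case True
    then obtain u where "x = Some (u, t)" "u \<in> V" unfolding myc_nbhd_root by blast
    then show ?thesis using top[of u] True unfolding myc_layer_def by simp
  next
    case False
    then show ?thesis unfolding myc_layer_def myc_nbhd_root by blast
  qed
qed

lemma myc_layer_below:
  assumes sg: "sgraph V E" and "s < t"
  shows "myc_layer t V E s = (\<Union>y\<in>myc_layer t V E (Suc s). nbhd (mycV t V) (mycE t V E) y)
                             - myc_layer t V E (Suc (Suc s)) - {None}"
    (is "?L = ?U - ?L2 - {None}")
proof
  show "?L \<subseteq> ?U - ?L2 - {None}"
  proof
    fix x assume "x \<in> ?L"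
    then obtain u where x: "x = Some (u, s)" "u \<in> V" "nbhd V E u \<noteq> {}"
      unfolding myc_layer_def using assms(2) by auto
    then obtain a where a: "a \<in> V" "{a, u} \<in> E" unfolding nbhd_def by auto
    have "u \<in> nbhd V E a" using a x(2) by (simp add: mem_nbhd_iff insert_commute)
    then have "Some (a, Suc s) \<in> myc_layer t V E (Suc s)"
      using a assms(2) unfolding myc_layer_def by auto
    moreover have "{u, a} \<in> E" using a(2) by (simp add: insert_commute)
    then have "x \<in> nbhd (mycV t V) (mycE t V E) (Some (a, Suc s))"
      using x a assms(2) by (simp add: nbhd_myc)
    ultimately show "x \<in> ?U - ?L2 - {None}" using x unfolding myc_layer_def by auto
  qed
  show "?U - ?L2 - {None} \<subseteq> ?L"
  proof
    fix x assume "x \<in> ?U - ?L2 - {None}"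
    then obtain a where a: "a \<in> V" "nbhd V E a \<noteq> {}" "Suc s \<le> t"
      and x: "x \<in> nbhd (mycV t V) (mycE t V E) (Some (a, Suc s))" "x \<notin> ?L2" "x \<noteq> None"
      unfolding myc_layer_def by auto
    then obtain b r where b: "x = Some (b, r)" by (cases x) auto
    then have e: "{b, a} \<in> E" and r: "s = r \<or> r = Suc (Suc s) \<and> Suc s < t"
      using x(1) by (auto simp: nbhd_myc)
    have "b \<in> V" using sgraph_edgeD[OF sg e] .
    moreover have "a \<in> nbhd V E b" using a(1) e by (simp add: mem_nbhd_iff insert_commute)
    ultimately have "Some (b, r') \<in> myc_layer t V E r'" if "r' \<le> t" for r'
      using that unfolding myc_layer_def by blast
    then show "x \<in> ?L" using r x(2) b assms(2) by auto
  qed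
qed

lemma myc_automorphism_top_layer:
  assumes sg: "sgraph V E" and t: "1 \<le> t" and f: "automorphism (mycV t V) (mycE t V E) f"
    and root: "f None = None"
  shows "f ` myc_layer t V E t = myc_layer t V E t"
proof -
  let ?M = "mycV t V" and ?N = "nbhd (mycV t V) (mycE t V E)"
  have inj: "inj_on f ?M" using automorphism_bij[OF f] by (rule bij_betw_imp_inj_on)
  have NM: "?N x \<subseteq> ?M" for x unfolding nbhd_def by auto
  have N_root: "f ` ?N None = ?N None" using automorphism_nbhd[OF f None_in_mycV] root by simp
  have P: "?N (f x) \<noteq> {None} \<longleftrightarrow> ?N x \<noteq> {None}" if "x \<in> ?M" for x
  proof -
    have "?N (f x) = f ` ?N x" using automorphism_nbhd[OF f that] .
    moreover have "f ` ?N x = f ` {None} \<longleftrightarrow> ?N x = {None}"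
      using inj_on_image_eq_iff[OF inj NM, of "{None}"] by simp
    ultimately show ?thesis using root by simp
  qed
  have "f ` {x \<in> ?N None. ?N x \<noteq> {None}} = {x \<in> ?N None. ?N x \<noteq> {None}}"
  proof
    show "f ` {x \<in> ?N None. ?N x \<noteq> {None}} \<subseteq> {x \<in> ?N None. ?N x \<noteq> {None}}"
      using N_root P NM by blast
    show "{x \<in> ?N None. ?N x \<noteq> {None}} \<subseteq> f ` {x \<in> ?N None. ?N x \<noteq> {None}}"
    proof
      fix y assume y: "y \<in> {x \<in> ?N None. ?N x \<noteq> {None}}"
      then obtain x where "x \<in> ?N None" "y = f x" using N_root by blast
      then show "y \<in> f ` {x \<in> ?N None. ?N x \<noteq> {None}}" using y P NM by blast
    qed
  qed
  then show ?thesis using myc_layer_top[OF sg t] by simp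
qed

lemma myc_automorphism_layer_below:
  assumes sg: "sgraph V E" and "s < t" and f: "automorphism (mycV t V) (mycE t V E) f"
    and root: "f None = None"
    and IH: "f ` myc_layer t V E (Suc s) = myc_layer t V E (Suc s)"
      "f ` myc_layer t V E (Suc (Suc s)) = myc_layer t V E (Suc (Suc s))"
  shows "f ` myc_layer t V E s = myc_layer t V E s"
proof -
  let ?N = "nbhd (mycV t V) (mycE t V E)"
  let ?U = "\<Union> (?N ` myc_layer t V E (Suc s))" and ?L2 = "myc_layer t V E (Suc (Suc s))"
  have inj: "inj_on f (mycV t V)" using automorphism_bij[OF f] by (rule bij_betw_imp_inj_on)
  have U: "?U \<subseteq> mycV t V" unfolding nbhd_def by blast
  have "f ` (?U - ?L2 - {None}) = f ` (?U - ?L2) - f ` {None}"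
    by (rule inj_on_image_set_diff[OF inj]) (use U in auto)
  moreover have "f ` (?U - ?L2) = f ` ?U - f ` ?L2"
    by (rule inj_on_image_set_diff[OF inj]) (use U myc_layer_subset[of t V E "Suc (Suc s)"] in auto)
  ultimately have "f ` myc_layer t V E s = f ` ?U - f ` ?L2 - f ` {None}"
    unfolding myc_layer_below[OF sg assms(2)] by simp
  also have "f ` ?U = (\<Union>x\<in>f ` myc_layer t V E (Suc s). ?N x)"
    by (rule automorphism_UN_nbhd[OF f myc_layer_subset])
  also have "\<dots> = ?U" unfolding IH(1) ..
  also have "?U - f ` ?L2 - f ` {None} = myc_layer t V E s"
    unfolding myc_layer_below[OF sg assms(2)] IH(2) using root by simp
  finally show ?thesis .
qed

lemma myc_automorphism_layer:
  assumes "sgraph V E" "1 \<le> t" "automorphism (mycV t V) (mycE t V E) f" "f None = None"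
  shows "f ` myc_layer t V E s = myc_layer t V E s"
proof (induction "t - s" arbitrary: s rule: less_induct)
  case less
  consider "t < s" | "s = t" | "s < t" by linarith
  then show ?case
  proof cases
    case 1
    then show ?thesis unfolding myc_layer_def by auto
  next
    case 2
    then show ?thesis using myc_automorphism_top_layer[OF assms] by simp
  next
    case 3
    then show ?thesis using myc_automorphism_layer_below[OF assms(1) 3 assms(3,4)] less by simp
  qed
qed

lemma myc_automorphism_keeps_layer:
  assumes "sgraph V E" "1 \<le> t" "automorphism (mycV t V) (mycE t V E) f" "f None = None"
    and "u \<in> V" "nbhd V E u \<noteq> {}" "s \<le> t"
  obtains u' where "f (Some (u, s)) = Some (u', s)" "u' \<in> V" "nbhd V E u' \<noteq> {}"
proof -
  have "Some (u, s) \<in> myc_layer t V E s" using assms(5-7) unfolding myc_layer_def by blast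
  then have "f (Some (u, s)) \<in> myc_layer t V E s" using myc_automorphism_layer[OF assms(1-4)] by blast
  then show ?thesis using that unfolding myc_layer_def by blast
qed

lemma myc_automorphism_isolated:
  assumes sg: "sgraph V E" and t: "1 \<le> t" and ab: "a \<in> V" "b \<in> V" "a \<noteq> b"
    and f: "automorphism (mycV t V) (mycE t V E) f" and root: "f None = None"
    and v: "v \<in> V" "nbhd V E v = {}" "s \<le> t"
  obtains u r where "f (Some (v, s)) = Some (u, r)" "u \<in> V" "nbhd V E u = {}" "r \<le> t"
    "r = t \<longleftrightarrow> s = t"
proof -
  let ?N = "nbhd (mycV t V) (mycE t V E)"
  have x: "Some (v, s) \<in> mycV t V" using v by simp
  have N: "?N (f (Some (v, s))) = (if s = t then {None} else {})"
    using automorphism_nbhd[OF f x] myc_nbhd_isolated[OF sg v(1,2)] root by simp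
  then have "?N (f (Some (v, s))) \<subseteq> {None}" by simp
  moreover have "f (Some (v, s)) \<in> mycV t V" using bij_betwE[OF automorphism_bij[OF f]] x by blast
  ultimately obtain u r where u: "f (Some (v, s)) = Some (u, r)" "u \<in> V" "nbhd V E u = {}" "r \<le> t"
    using myc_nbhd_subset_singleton[OF sg t ab] by metis
  have "(if r = t then {None} else {}) = (if s = t then {None} else ({} :: ('a \<times> nat) option set))"
    using N myc_nbhd_isolated[OF sg u(2,3), where s=r and t=t] unfolding u(1) by simp
  then have "r = t \<longleftrightarrow> s = t" by (cases "r = t"; cases "s = t") simp_all
  with u that show ?thesis by blast
qed

lemma myc_automorphism_base:
  assumes "sgraph V E" and f: "automorphism (mycV t V) (mycE t V E) f"
    and g: "\<And>v. v \<in> V \<Longrightarrow> f (Some (v, 0)) = Some (g v, 0)"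
  shows "automorphism V E g"
proof -
  have bij: "bij_betw f (mycV t V) (mycV t V)" using automorphism_bij[OF f] .
  have gV: "g ` V \<subseteq> V"
  proof
    fix w assume "w \<in> g ` V"
    then obtain v where "v \<in> V" "w = g v" by blast
    then have "Some (w, 0) \<in> mycV t V" using bij_betwE[OF bij] g by (metis Some_in_mycV le0)
    then show "w \<in> V" by simp
  qed
  have inj: "inj_on g V"
  proof (rule inj_onI)
    fix v w assume "v \<in> V" "w \<in> V" "g v = g w"
    then have "f (Some (v, 0)) = f (Some (w, 0))" using g by simp
    moreover have "Some (v, 0) \<in> mycV t V" "Some (w, 0) \<in> mycV t V" using \<open>v \<in> V\<close> \<open>w \<in> V\<close> by simp_all
    ultimately have "Some (v, 0) = Some (w, 0)" using inj_onD[OF bij_betw_imp_inj_on[OF bij]] by blast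
    then show "v = w" by simp
  qed
  have "{g x, g y} \<in> E \<longleftrightarrow> {x, y} \<in> E" if "x \<in> V" "y \<in> V" for x y
    using myc_automorphism_adj[OF f, of "Some (x, 0)" "Some (y, 0)"] that g by simp
  then show ?thesis
    unfolding automorphism_def bij_betw_def
    using inj endo_inj_surj[OF sgraph_finite[OF assms(1)] gV inj] by blast
qed

lemma myc_automorphism_next_layer_twins:
  assumes f: "automorphism (mycV t V) (mycE t V E) f" and "s < t"
    and fixed: "\<And>a. a \<in> V \<Longrightarrow> f (Some (a, s)) = Some (a, s)"
    and v: "v \<in> V" "v' \<in> V" "f (Some (v, Suc s)) = Some (v', Suc s)"
  shows "twins V E v v'"
proof -
  have "{a, v} \<in> E \<longleftrightarrow> {a, v'} \<in> E" if "a \<in> V" for a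
    using myc_automorphism_adj[OF f, of "Some (a, s)" "Some (v, Suc s)"] that fixed[OF that] v assms(2)
    by simp
  then show ?thesis unfolding twins_def nbhd_def using v by auto
qed

section \<open>The upper bound\<close>

text \<open>R contains one vertex of each twin class, r0 \<in> R is isolated, and D is a determining set of
  the twin quotient.\<close>
definition myc_det_set ::
    "nat \<Rightarrow> 'a set \<Rightarrow> 'a set set \<Rightarrow> 'a set \<Rightarrow> 'a \<Rightarrow> 'a set set \<Rightarrow> ('a \<times> nat) option set" where
  "myc_det_set t V E R r0 D =
     Some ` ((V - R) \<times> {..t} \<union> {r0} \<times> {1..<t} \<union> {r \<in> R. twin_class V E r \<in> D} \<times> {0})"

lemma card_myc_det_set:
  assumes "finite V" "twin_transversal V E R" "D \<subseteq> quotV V E"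
  shows "card (myc_det_set t V E R r0 D) \<le> card (V - R) * (t + 1) + (t - 1) + card D"
proof -
  let ?A = "(V - R) \<times> {..t}" and ?B = "{r0} \<times> {1..<t}" and ?C = "{r \<in> R. twin_class V E r \<in> D}"
  have "finite R" using assms(1,2) finite_subset unfolding twin_transversal_def by blast
  have inj: "inj_on (twin_class V E) R"
    using twin_transversal_twin_class_bij[OF assms(2)] by (rule bij_betw_imp_inj_on)
  have "card ?C \<le> card D"
    using card_inj_on_le[OF inj_on_subset[OF inj], of ?C D] finite_subset[OF assms(3) quotV_finite[OF assms(1)]]
    by blast
  have "card (myc_det_set t V E R r0 D) \<le> card (?A \<union> ?B \<union> ?C \<times> {0})"
    unfolding myc_det_set_def by (rule card_image_le) (use assms(1) \<open>finite R\<close> in simp)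
  also have "\<dots> \<le> card ?A + card ?B + card (?C \<times> {0::nat})"
    by (meson add_le_mono1 card_Un_le le_trans)
  also have "\<dots> \<le> card (V - R) * (t + 1) + (t - 1) + card D"
    using \<open>card ?C \<le> card D\<close> by (simp add: card_cartesian_product)
  finally show ?thesis .
qed

locale myc_det_set_automorphism =
  fixes V :: "'a set" and E t R r0 D f and a b :: 'a
  assumes sgraph: "sgraph V E" and t_pos: "1 \<le> t" and transversal: "twin_transversal V E R"
    and r0: "r0 \<in> R" "nbhd V E r0 = {}" and ab: "a \<in> V" "b \<in> V" "a \<noteq> b"
    and D: "determining_set (quotV V E) (quotE V E) D"
    and aut: "automorphism (mycV t V) (mycE t V E) f"
    and fixes_det_set: "\<forall>x\<in>myc_det_set t V E R r0 D. f x = x"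
begin

lemma R_subset: "R \<subseteq> V" and rep_unique: "r \<in> R \<Longrightarrow> r' \<in> R \<Longrightarrow> twins V E r r' \<Longrightarrow> r = r'"
  using transversal unfolding twin_transversal_def by auto

lemma mem_det_set: "Some (v, s) \<in> myc_det_set t V E R r0 D \<longleftrightarrow>
    v \<in> V - R \<and> s \<le> t \<or> v = r0 \<and> 0 < s \<and> s < t \<or> v \<in> R \<and> twin_class V E v \<in> D \<and> s = 0"
  unfolding myc_det_set_def by auto

lemma fixes_if_image_in_det_set:
  "x \<in> mycV t V \<Longrightarrow> f x \<in> myc_det_set t V E R r0 D \<Longrightarrow> f x = x"
  using automorphism_fixed_preimage[OF aut fixes_det_set] .

lemma fixes_root: "f None = None"
  using myc_automorphism_fixes_root[OF sgraph t_pos _ ab aut] r0 R_subset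
  unfolding isolated_def by blast

lemma isolated_rep: "v \<in> R \<Longrightarrow> nbhd V E v = {} \<Longrightarrow> v = r0"
  using rep_unique[of v r0] r0 R_subset unfolding twins_def by auto

text \<open>All isolated copies except r0^0 and r0^t lie in the set, and an isolated copy is mapped to an
  isolated copy with the same neighbourhood, empty or the root.\<close>
lemma fixes_isolated:
  assumes v: "v \<in> V" "nbhd V E v = {}" "s \<le> t"
  shows "f (Some (v, s)) = Some (v, s)"
proof (cases "v \<in> R \<and> (s = 0 \<or> s = t)")
  case False
  then have "Some (v, s) \<in> myc_det_set t V E R r0 D"
    using v isolated_rep unfolding mem_det_set by fastforce
  then show ?thesis using fixes_det_set by blast
next
  case True
  then have "v = r0" using isolated_rep v(2) by blast
  obtain u r where u: "f (Some (v, s)) = Some (u, r)" "u \<in> V" "nbhd V E u = {}" "r \<le> t"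
    and r: "r = t \<longleftrightarrow> s = t"
    using myc_automorphism_isolated[OF sgraph t_pos ab aut fixes_root v] by metis
  show ?thesis
  proof (cases "u \<in> R \<and> (r = 0 \<or> r = t)")
    case True
    then have "u = r0" "r = s" using isolated_rep u(3) r \<open>v \<in> R \<and> (s = 0 \<or> s = t)\<close> t_pos by auto
    then show ?thesis using u(1) \<open>v = r0\<close> by simp
  next
    case False
    then have "f (Some (v, s)) \<in> myc_det_set t V E R r0 D"
      unfolding u(1) mem_det_set using u(2-4) isolated_rep by auto
    then show ?thesis using fixes_if_image_in_det_set v by simp
  qed
qed

lemma fixes_twin_image:
  assumes "v \<in> V" "s \<le> t" "f (Some (v, s)) = Some (v', s)" "twins V E v v'"
  shows "f (Some (v, s)) = Some (v, s)"
proof -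
  have "v' \<in> V" using assms(4) unfolding twins_def by blast
  consider "v \<notin> R" | "v' \<notin> R" | "v \<in> R" "v' \<in> R" by blast
  then show ?thesis
  proof cases
    case 1
    then have "Some (v, s) \<in> myc_det_set t V E R r0 D" using assms(1,2) unfolding mem_det_set by simp
    then show ?thesis using fixes_det_set by blast
  next
    case 2
    then have "f (Some (v, s)) \<in> myc_det_set t V E R r0 D"
      unfolding assms(3) mem_det_set using 2 assms(2) \<open>v' \<in> V\<close> by simp
    then show ?thesis using fixes_if_image_in_det_set assms(1,2) by simp
  next
    case 3
    then have "v = v'" using rep_unique assms(4) by blast
    then show ?thesis using assms(3) by simp
  qed
qed

definition base_map :: "'a \<Rightarrow> 'a" where
  "base_map v = fst (the (f (Some (v, 0))))"

lemma base_map: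
  assumes "v \<in> V"
  shows "f (Some (v, 0)) = Some (base_map v, 0)"
proof (cases "nbhd V E v = {}")
  case True
  then show ?thesis using fixes_isolated[OF assms True] unfolding base_map_def by simp
next
  case False
  then obtain u where "f (Some (v, 0)) = Some (u, 0)"
    using myc_automorphism_keeps_layer[OF sgraph t_pos aut fixes_root assms False] by blast
  then show ?thesis unfolding base_map_def by simp
qed

lemma base_map_automorphism: "automorphism V E base_map"
  using myc_automorphism_base[OF sgraph aut base_map] .

text \<open>The induced automorphism of the twin quotient fixes D, hence every twin class.\<close>
lemma base_map_twins:
  assumes v: "v \<in> V"
  shows "twins V E v (base_map v)"
proof -
  let ?g = "base_map" and ?Q = "quotV V E"
  have fixes_D: "?g ` C = C" if "C \<in> D" for C
  proof -
    have "C \<in> ?Q" using that D unfolding determining_set_def by blast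
    then obtain u where u: "u \<in> V" "C = twin_class V E u" unfolding quotV_def by blast
    then obtain r where r: "r \<in> R" "twins V E u r"
      using transversal unfolding twin_transversal_def by blast
    then have rV: "r \<in> V" and C: "C = twin_class V E r"
      using u twin_class_eq_iff[of u V r E] unfolding twins_def by auto
    then have "Some (r, 0) \<in> myc_det_set t V E R r0 D" using r(1) that unfolding mem_det_set by simp
    then have "?g r = r" using fixes_det_set base_map[OF rV] by simp
    then show ?thesis using automorphism_twin_class[OF base_map_automorphism rV] C by simp
  qed
  have "twin_class V E v \<in> ?Q" using v unfolding quotV_def by blast
  then have "?g ` twin_class V E v = twin_class V E v"
    using D automorphism_quot[OF base_map_automorphism sgraph_finite[OF sgraph]] fixes_D
    unfolding determining_set_def by blast
  moreover have "?g v \<in> V"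
    using bij_betwE[OF automorphism_bij[OF base_map_automorphism]] v by blast
  ultimately show ?thesis
    using automorphism_twin_class[OF base_map_automorphism v] twin_class_eq_iff[OF v, of "?g v" E]
    by simp
qed

text \<open>Layer by layer: a non-isolated copy is sent into its own layer, and its neighbours
  in the layer below (already fixed) identify it up to twins.\<close>
lemma fixes_layer: "s \<le> t \<Longrightarrow> v \<in> V \<Longrightarrow> f (Some (v, s)) = Some (v, s)"
proof (induction s arbitrary: v)
  case 0
  then show ?case using fixes_twin_image base_map base_map_twins by blast
next
  case (Suc s)
  show ?case
  proof (cases "nbhd V E v = {}")
    case True
    then show ?thesis using fixes_isolated Suc.prems by blast
  next
    case False
    then obtain v' where v': "f (Some (v, Suc s)) = Some (v', Suc s)" "v' \<in> V"
      using myc_automorphism_keeps_layer[OF sgraph t_pos aut fixes_root Suc.prems(2) _ Suc.prems(1)]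
      by blast
    have "twins V E v v'"
      using myc_automorphism_next_layer_twins[OF aut _ _ Suc.prems(2) v'(2,1)] Suc by simp
    then show ?thesis using fixes_twin_image Suc.prems v' by blast
  qed
qed

lemma fixes_all: "\<forall>x\<in>mycV t V. f x = x"
proof
  fix x assume "x \<in> mycV t V"
  then show "f x = x" using fixes_root fixes_layer unfolding mycV_def by auto
qed

end

lemma myc_det_set_determining:
  assumes "sgraph V E" "1 \<le> t" "twin_transversal V E R" "r0 \<in> R" "nbhd V E r0 = {}"
    and "a \<in> V" "b \<in> V" "a \<noteq> b" and "determining_set (quotV V E) (quotE V E) D"
  shows "determining_set (mycV t V) (mycE t V E) (myc_det_set t V E R r0 D)"
proof -
  have "R \<subseteq> V" using assms(3) unfolding twin_transversal_def by blast
  then have "myc_det_set t V E R r0 D \<subseteq> mycV t V"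
    using assms(4) unfolding myc_det_set_def mycV_def by auto
  moreover have "\<forall>x\<in>mycV t V. f x = x"
    if "automorphism (mycV t V) (mycE t V E) f" "\<forall>x\<in>myc_det_set t V E R r0 D. f x = x" for f
  proof -
    interpret myc_det_set_automorphism V E t R r0 D f a b
      using assms that by unfold_locales
    show ?thesis by (rule fixes_all)
  qed
  ultimately show ?thesis unfolding determining_set_def by blast
qed

lemma myc_det_num_upper_bound:
  assumes sg: "sgraph V E" and t: "1 \<le> t" and iso: "isolated V E v0"
    and tw: "has_distinct_twins V E" and T: "min_twin_cover V E T"
  shows "det_num (mycV t V) (mycE t V E) \<le> det_num (quotV V E) (quotE V E) + (t + 1) * card T + t - 1"
proof -
  have fin: "finite V" using sgraph_finite[OF sg] .
  obtain R where R: "twin_transversal V E R" using twin_transversal_exists .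
  obtain D where D: "determining_set (quotV V E) (quotE V E) D"
    "card D = det_num (quotV V E) (quotE V E)"
    using det_num_attained[OF quotV_finite[OF fin]] .
  obtain r0 where r0: "r0 \<in> R" "twins V E v0 r0"
    using R iso unfolding twin_transversal_def isolated_def by blast
  then have "nbhd V E r0 = {}" using iso unfolding isolated_def twins_def by simp
  obtain a b where ab: "a \<in> V" "b \<in> V" "a \<noteq> b"
    using tw unfolding has_distinct_twins_def twins_def by blast
  have RV: "R \<subseteq> V" using R unfolding twin_transversal_def by blast
  have "card (V - R) = card T"
    using card_Diff_subset[OF finite_subset[OF RV fin] RV] min_twin_cover_card[OF fin T]
      bij_betw_same_card[OF twin_transversal_twin_class_bij[OF R]] by simp
  moreover have "det_num (mycV t V) (mycE t V E) \<le> card (myc_det_set t V E R r0 D)"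
    using det_num_le_card[OF mycV_finite[OF fin]
        myc_det_set_determining[OF sg t R r0(1) \<open>nbhd V E r0 = {}\<close> ab D(1)]] .
  moreover have "D \<subseteq> quotV V E" using D(1) unfolding determining_set_def by blast
  ultimately show ?thesis
    using card_myc_det_set[OF fin R, of D t r0] D(2) t by (simp add: algebra_simps)
qed

section \<open>Sharpness\<close>

text \<open>The twin quotient is a single vertex here, so the two bounds coincide.\<close>
lemma two_isolated_vertices:
  shows "sgraph {0, 1 :: nat} {}" "isolated {0, 1 :: nat} {} 0" "has_distinct_twins {0, 1 :: nat} {}"
    "min_twin_cover {0, 1 :: nat} {} {0}" "det_num (quotV {0, 1 :: nat} {}) (quotE {0, 1} {}) = 0"
proof -
  let ?V = "{0, 1 :: nat}"
  have tw: "twins ?V {} u v \<longleftrightarrow> u \<in> ?V \<and> v \<in> ?V" for u v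
    unfolding twins_def nbhd_def by simp
  show "sgraph ?V {}" unfolding sgraph_def by simp
  show "isolated ?V {} 0" unfolding isolated_def nbhd_def by simp
  show "has_distinct_twins ?V {}" unfolding has_distinct_twins_def tw by blast
  have "twin_cover ?V {} {0}" unfolding twin_cover_def tw by auto
  moreover have "1 \<le> card T'" if "twin_cover ?V {} T'" for T'
  proof -
    have "T' \<subseteq> ?V" "T' \<noteq> {}" using that unfolding twin_cover_def tw by auto
    then show ?thesis using finite_subset[of T' ?V] by (simp add: Suc_leI card_gt_0_iff)
  qed
  ultimately show "min_twin_cover ?V {} {0}" unfolding min_twin_cover_def by simp
  have "twin_class ?V {} v = ?V" if "v \<in> ?V" for v
    using that unfolding twin_class_def tw by blast
  then have Q: "quotV ?V {} = {?V}" unfolding quotV_def by blast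
  have "determining_set (quotV ?V {}) (quotE ?V {}) {}"
    unfolding determining_set_def
  proof (intro conjI allI impI)
    fix g assume "automorphism (quotV ?V {}) (quotE ?V {}) g"
    then have "g ?V \<in> {?V}" using bij_betwE[OF automorphism_bij] unfolding Q by blast
    then show "\<forall>C\<in>quotV ?V {}. g C = C" unfolding Q by simp
  qed simp
  then have "det_num (quotV ?V {}) (quotE ?V {}) \<le> 0"
    using det_num_le_card[of "quotV ?V {}"] unfolding Q by fastforce
  then show "det_num (quotV ?V {}) (quotE ?V {}) = 0" by simp
qed

lemma two_isolated_vertices_det_num:
  assumes "1 \<le> t"
  shows "det_num (mycV t {0, 1 :: nat}) (mycE t {0, 1} {}) = (t + 1) * card {0 :: nat} + t - 1"
  using myc_det_num_lower_bound[OF two_isolated_vertices(1) assms two_isolated_vertices(2,4)]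
    myc_det_num_upper_bound[OF two_isolated_vertices(1) assms two_isolated_vertices(2,3,4)]
    two_isolated_vertices(5)
  by simp

theorem mainTheorem8:
  shows "(\<forall>(V :: 'a set) E T t.
            sgraph V E \<and> (\<exists>v. isolated V E v) \<and> has_distinct_twins V E \<and>
            min_twin_cover V E T \<and> t \<ge> 1 \<longrightarrow>
              (t + 1) * card T + t - 1 \<le> det_num (mycV t V) (mycE t V E) \<and>
              det_num (mycV t V) (mycE t V E)
                \<le> det_num (quotV V E) (quotE V E) + (t + 1) * card T + t - 1)
       \<and> (\<forall>t::nat. t \<ge> 1 \<longrightarrow>
            (\<exists>(V :: nat set) E T.
               sgraph V E \<and> (\<exists>v. isolated V E v) \<and> has_distinct_twins V E \<and>
               min_twin_cover V E T \<and>
               det_num (mycV t V) (mycE t V E) = (t + 1) * card T + t - 1)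
          \<and> (\<exists>(V :: nat set) E T.
               sgraph V E \<and> (\<exists>v. isolated V E v) \<and> has_distinct_twins V E \<and>
               min_twin_cover V E T \<and>
               det_num (mycV t V) (mycE t V E)
                 = det_num (quotV V E) (quotE V E) + (t + 1) * card T + t - 1))"
proof (intro conjI allI impI; (elim conjE exE)?)
  fix V :: "'a set" and E T and t :: nat and v
  assume G: "sgraph V E" "isolated V E v" "has_distinct_twins V E" "min_twin_cover V E T"
    and t: "1 \<le> t"
  show "(t + 1) * card T + t - 1 \<le> det_num (mycV t V) (mycE t V E)"
    using myc_det_num_lower_bound[OF G(1) t G(2,4)] .
  show "det_num (mycV t V) (mycE t V E) \<le> det_num (quotV V E) (quotE V E) + (t + 1) * card T + t - 1"
    using myc_det_num_upper_bound[OF G(1) t G(2-4)] .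
next
  fix t :: nat assume "1 \<le> t"
  then show "\<exists>(V :: nat set) E T. sgraph V E \<and> (\<exists>v. isolated V E v) \<and> has_distinct_twins V E \<and>
      min_twin_cover V E T \<and> det_num (mycV t V) (mycE t V E) = (t + 1) * card T + t - 1"
    and "\<exists>(V :: nat set) E T. sgraph V E \<and> (\<exists>v. isolated V E v) \<and> has_distinct_twins V E \<and>
      min_twin_cover V E T \<and> det_num (mycV t V) (mycE t V E)
        = det_num (quotV V E) (quotE V E) + (t + 1) * card T + t - 1"
    using two_isolated_vertices two_isolated_vertices_det_num by (metis add_0)+
qed

end
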